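(* Let $s\in I(\Phi)$ and let $C$ be an S-chamber for $s$. Then for every $\alpha\in\mathcal B^s_\star(C)$ there is a unique $\alpha'\in\mathcal B(C)$ such that $s(\alpha)-\alpha'\in\mathbb Z[\mathcal B^s_\bullet(C)]$. Moreover $\alpha''=s(\alpha)-\alpha'$ lies in $\mathbb Z^+[\mathcal B^s_\bullet(C)]$ and is the unique element of maximal height among the elements $\gamma\in\mathbb Z^+[\mathcal B^s_\bullet(C)]$ for which $\alpha+\gamma\in\Phi$.
   Context: $\Phi$ is a reduced crystallographic root system spanning a real Euclidean space $V$; $I(\Phi)$ is the set of orthogonal involutions of $V$ preserving $\Phi$. For $s\in I(\Phi)$: $\Phi^s_\bullet=\{\alpha:s\alpha=-\alpha\}$, $\Phi^s_\circ=\{\alpha:s\alpha=\alpha\}$, $\Phi^s_\star=\Phi\setminus(\Phi^s_\circ\cup\Phi^s_\bullet)$. For a Weyl chamber $C$ with positive roots $\Phi^+(C)$ and simple roots $\mathcal B(C)$, set $\mathcal B^s_\bullet(C)=\mathcal B(C)\cap\Phi^s_\bullet$, $\mathcal B^s_\star(C)=\mathcal B(C)\cap\Phi^s_\star$. $C$ is an S-chamber for $s$ if $s(\Phi^+(C)\cap\Phi^s_\star)\subseteq\Phi^+(C)$. For $S\subseteq V$, $\mathbb Z[S]$ ($\mathbb Z^+[S]$) is the set of integer (nonnegative integer) combinations of elements of $S$. The height of $\xi=\sum_{\beta\in\mathcal B(C)}k_\beta\beta$ is $\sum_\beta k_\beta$. *)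

theory Defs
  imports "HOL-Analysis.Analysis"
begin

definition root_system :: "'a::euclidean_space set \<Rightarrow> bool" where
  "root_system \<Phi> \<longleftrightarrow> finite \<Phi> \<and> 0 \<notin> \<Phi> \<and> span \<Phi> = UNIV \<and>
     (\<forall>\<alpha>\<in>\<Phi>. \<forall>\<beta>\<in>\<Phi>. \<beta> - (2 * (\<beta> \<bullet> \<alpha>) / (\<alpha> \<bullet> \<alpha>)) *\<^sub>R \<alpha> \<in> \<Phi>) \<and>
     (\<forall>\<alpha>\<in>\<Phi>. \<forall>\<beta>\<in>\<Phi>. 2 * (\<beta> \<bullet> \<alpha>) / (\<alpha> \<bullet> \<alpha>) \<in> \<int>) \<and>
     (\<forall>\<alpha>\<in>\<Phi>. \<forall>c::real. c *\<^sub>R \<alpha> \<in> \<Phi> \<longrightarrow> c = 1 \<or> c = -1)"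

definition invols :: "'a::euclidean_space set \<Rightarrow> ('a \<Rightarrow> 'a) set" where
  "invols \<Phi> = {s. orthogonal_transformation s \<and> (\<forall>x. s (s x) = x) \<and> s ` \<Phi> = \<Phi>}"

definition Phi_bullet :: "'a::euclidean_space set \<Rightarrow> ('a \<Rightarrow> 'a) \<Rightarrow> 'a set" where
  "Phi_bullet \<Phi> s = {\<alpha>\<in>\<Phi>. s \<alpha> = - \<alpha>}"

definition Phi_circ :: "'a::euclidean_space set \<Rightarrow> ('a \<Rightarrow> 'a) \<Rightarrow> 'a set" where
  "Phi_circ \<Phi> s = {\<alpha>\<in>\<Phi>. s \<alpha> = \<alpha>}"

definition Phi_star :: "'a::euclidean_space set \<Rightarrow> ('a \<Rightarrow> 'a) \<Rightarrow> 'a set" where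
  "Phi_star \<Phi> s = \<Phi> - (Phi_circ \<Phi> s \<union> Phi_bullet \<Phi> s)"

definition regular_set :: "'a::euclidean_space set \<Rightarrow> 'a set" where
  "regular_set \<Phi> = UNIV - (\<Union>\<alpha>\<in>\<Phi>. {x. \<alpha> \<bullet> x = 0})"

definition weyl_chamber :: "'a::euclidean_space set \<Rightarrow> 'a set \<Rightarrow> bool" where
  "weyl_chamber \<Phi> C \<longleftrightarrow>
     (\<exists>v\<in>regular_set \<Phi>. C = connected_component_set (regular_set \<Phi>) v)"

definition pos_roots :: "'a::euclidean_space set \<Rightarrow> 'a set \<Rightarrow> 'a set" where
  "pos_roots \<Phi> C = {\<alpha>\<in>\<Phi>. \<forall>x\<in>C. \<alpha> \<bullet> x > 0}"

definition simple_roots :: "'a::euclidean_space set \<Rightarrow> 'a set \<Rightarrow> 'a set" where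
  "simple_roots \<Phi> C = {\<alpha>\<in>pos_roots \<Phi> C.
     \<not> (\<exists>\<beta>\<in>pos_roots \<Phi> C. \<exists>\<gamma>\<in>pos_roots \<Phi> C. \<alpha> = \<beta> + \<gamma>)}"

definition B_bullet :: "'a::euclidean_space set \<Rightarrow> ('a \<Rightarrow> 'a) \<Rightarrow> 'a set \<Rightarrow> 'a set" where
  "B_bullet \<Phi> s C = simple_roots \<Phi> C \<inter> Phi_bullet \<Phi> s"

definition B_star :: "'a::euclidean_space set \<Rightarrow> ('a \<Rightarrow> 'a) \<Rightarrow> 'a set \<Rightarrow> 'a set" where
  "B_star \<Phi> s C = simple_roots \<Phi> C \<inter> Phi_star \<Phi> s"

definition S_chamber :: "'a::euclidean_space set \<Rightarrow> ('a \<Rightarrow> 'a) \<Rightarrow> 'a set \<Rightarrow> bool" where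
  "S_chamber \<Phi> s C \<longleftrightarrow> s ` (pos_roots \<Phi> C \<inter> Phi_star \<Phi> s) \<subseteq> pos_roots \<Phi> C"

definition int_comb :: "'a::real_vector set \<Rightarrow> 'a set" where
  "int_comb S = {x. \<exists>T c. finite T \<and> T \<subseteq> S \<and> x = (\<Sum>\<beta>\<in>T. real_of_int (c \<beta>) *\<^sub>R \<beta>)}"

definition nonneg_int_comb :: "'a::real_vector set \<Rightarrow> 'a set" where
  "nonneg_int_comb S = {x. \<exists>T c. finite T \<and> T \<subseteq> S \<and> x = (\<Sum>\<beta>\<in>T. real (c \<beta> :: nat) *\<^sub>R \<beta>)}"

definition height :: "'a::euclidean_space set \<Rightarrow> 'a set \<Rightarrow> 'a \<Rightarrow> real" where
  "height \<Phi> C \<xi> = (\<Sum>\<beta>\<in>simple_roots \<Phi> C. representation (simple_roots \<Phi> C) \<xi> \<beta>)"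

end

theory Submission
  imports Defs
begin

text \<open>
  The simple roots \<open>B\<close> of \<open>C\<close> form a basis in which positive roots have nonnegative integer
  coordinates, and \<open>x = s \<alpha>\<close> is positive because \<open>C\<close> is an S-chamber. Let \<open>h\<close> be the sum of the
  coordinates at \<open>B - B\<^sub>\<bullet>\<close>. Then \<open>h (s \<beta>) = 0\<close> for \<open>\<beta> \<in> B\<^sub>\<bullet>\<close> and \<open>h (s \<beta>) \<ge> 1\<close> for the
  other simple roots, so expanding \<open>\<alpha> = s x\<close> gives \<open>1 = h \<alpha> \<ge> h x\<close>, while \<open>h x \<ge> 1\<close> since
  \<open>s x \<noteq> -x\<close>. Hence \<open>x\<close> has coordinate \<open>1\<close> at a single \<open>\<alpha>' \<in> B - B\<^sub>\<bullet>\<close> and \<open>0\<close> at the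
  rest of \<open>B - B\<^sub>\<bullet>\<close>: \<open>\<alpha>'' = x - \<alpha>' \<in> \<int>\<^sup>+[B\<^sub>\<bullet>]\<close>, and \<open>\<alpha> + \<alpha>'' = s \<alpha>'\<close> is a root.
  If \<open>\<gamma> \<in> \<int>\<^sup>+[B\<^sub>\<bullet>]\<close> and \<open>\<alpha> + \<gamma>\<close> is a root, so is \<open>s (\<alpha> + \<gamma>) = x - \<gamma>\<close>; its coordinate at
  \<open>\<alpha>'\<close> is \<open>1\<close>, so it is positive, which bounds every coordinate of \<open>\<gamma>\<close> by that of \<open>\<alpha>''\<close>.
\<close>

lemma independent_if_pairwise_obtuse:
  fixes S :: "'a::euclidean_space set"
  assumes finite: "finite S" and pos: "\<And>x. x \<in> S \<Longrightarrow> x \<bullet> w > 0"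
    and obtuse: "\<And>x y. x \<in> S \<Longrightarrow> y \<in> S \<Longrightarrow> x \<noteq> y \<Longrightarrow> x \<bullet> y \<le> 0"
  shows "independent S"
proof -
  have no_pos: "{x\<in>S. u x > 0} = {}" if sum0: "(\<Sum>x\<in>S. u x *\<^sub>R x) = 0" for u
  proof -
    define Sp where "Sp = {x\<in>S. u x > 0}"
    define Sn where "Sn = {x\<in>S. u x < 0}"
    have fin: "finite Sp" "finite Sn" using finite by (simp_all add: Sp_def Sn_def)
    define \<epsilon> where "\<epsilon> = (\<Sum>x\<in>Sp. u x *\<^sub>R x)"
    have "(\<Sum>x\<in>S. u x *\<^sub>R x) = (\<Sum>x\<in>Sp \<union> Sn. u x *\<^sub>R x)"
      by (rule sum.mono_neutral_right) (auto simp: finite Sp_def Sn_def)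
    also have "\<dots> = \<epsilon> + (\<Sum>x\<in>Sn. u x *\<^sub>R x)"
      unfolding \<epsilon>_def by (rule sum.union_disjoint[OF fin]) (auto simp: Sp_def Sn_def)
    finally have \<epsilon>_Sn: "\<epsilon> = (\<Sum>y\<in>Sn. (- u y) *\<^sub>R y)"
      using sum0 by (simp add: sum_negf eq_neg_iff_add_eq_0)
    \<comment> \<open>\<open>\<epsilon>\<close> is a nonnegative combination of \<open>Sp\<close> and of \<open>Sn\<close>, and these meet at obtuse angles.\<close>
    have "\<epsilon> \<bullet> \<epsilon> = (\<Sum>y\<in>Sn. \<Sum>x\<in>Sp. (u x * - u y) * (x \<bullet> y))"
      by (subst (2) \<epsilon>_Sn) (simp add: \<epsilon>_def inner_sum_left inner_sum_right sum_negf sum_distrib_left mult.assoc mult.left_commute)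
    also have "\<dots> \<le> 0"
    proof (intro sum_nonpos)
      fix y x assume "y \<in> Sn" "x \<in> Sp"
      then have "x \<in> S" "y \<in> S" "x \<noteq> y" "u x * - u y \<ge> 0" by (auto simp: Sp_def Sn_def mult_nonneg_nonpos)
      then show "(u x * - u y) * (x \<bullet> y) \<le> 0" using obtuse by (intro mult_nonneg_nonpos) auto
    qed
    finally have "\<epsilon> = 0" by (metis antisym inner_eq_zero_iff inner_ge_zero)
    moreover have "\<epsilon> \<bullet> w = (\<Sum>x\<in>Sp. u x * (x \<bullet> w))" by (simp add: \<epsilon>_def inner_sum_left)
    ultimately have "(\<Sum>x\<in>Sp. u x * (x \<bullet> w)) = 0" by simp
    moreover have "(\<Sum>x\<in>Sp. u x * (x \<bullet> w)) > 0" if "Sp \<noteq> {}"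
      using pos by (intro sum_pos[OF fin(1) that]) (auto simp: Sp_def)
    ultimately show ?thesis unfolding Sp_def by fastforce
  qed
  have "u x = 0" if "(\<Sum>x\<in>S. u x *\<^sub>R x) = 0" "x \<in> S" for u x
  proof -
    have "(\<Sum>x\<in>S. (- u x) *\<^sub>R x) = 0" using that(1) by (simp add: sum_negf)
    then have "\<not> - u x > 0" using no_pos[of "\<lambda>x. - u x"] that(2) by blast
    moreover have "\<not> u x > 0" using no_pos[of u] that by blast
    ultimately show ?thesis by linarith
  qed
  then show ?thesis by (auto simp: dependent_finite[OF finite])
qed

lemma nonneg_int_comb_subset_int_comb: "nonneg_int_comb S \<subseteq> int_comb S"
proof
  fix x assume "x \<in> nonneg_int_comb S"
  then obtain T c where "finite T" "T \<subseteq> S" "x = (\<Sum>\<beta>\<in>T. real (c \<beta>) *\<^sub>R \<beta>)"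
    by (auto simp: nonneg_int_comb_def)
  then show "x \<in> int_comb S" unfolding int_comb_def by (intro CollectI exI[of _ T] exI[of _ "int \<circ> c"]) simp
qed

lemma int_comb_subset_span: "int_comb S \<subseteq> span S"
  unfolding int_comb_def by (auto intro!: span_sum span_scale intro: span_base)

subsection \<open>Root systems\<close>

lemma root_system_uminus:
  assumes "root_system \<Phi>" "\<alpha> \<in> \<Phi>"
  shows "- \<alpha> \<in> \<Phi>"
proof -
  have "\<alpha> \<bullet> \<alpha> \<noteq> 0" using assms by (auto simp: root_system_def)
  then have "\<alpha> - (2 * (\<alpha> \<bullet> \<alpha>) / (\<alpha> \<bullet> \<alpha>)) *\<^sub>R \<alpha> = - \<alpha>" by (simp add: algebra_simps scaleR_2)
  with assms show ?thesis unfolding root_system_def by metis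
qed

lemma root_system_inner_eq_norm_mult:
  assumes "root_system \<Phi>" "\<beta> \<in> \<Phi>" "\<gamma> \<in> \<Phi>" "\<beta> \<bullet> \<gamma> = norm \<beta> * norm \<gamma>"
  shows "\<beta> = \<gamma>"
proof -
  have "norm \<gamma> \<noteq> 0" using assms(1,3) by (auto simp: root_system_def)
  moreover have "norm \<beta> *\<^sub>R \<gamma> = norm \<gamma> *\<^sub>R \<beta>" using assms(4) by (simp add: norm_cauchy_schwarz_eq)
  ultimately have \<beta>: "\<beta> = (norm \<beta> / norm \<gamma>) *\<^sub>R \<gamma>"
    by (metis divide_inverse_commute scaleR_one scaleR_scaleR right_inverse mult.commute)
  then have "norm \<beta> / norm \<gamma> = 1 \<or> norm \<beta> / norm \<gamma> = -1"
    using assms(1-3) unfolding root_system_def by metis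
  moreover have "norm \<beta> / norm \<gamma> \<ge> 0" by simp
  ultimately have "norm \<beta> / norm \<gamma> = 1" by linarith
  with \<beta> show ?thesis by simp
qed

lemma Ints_mult_lt_4_imp_eq_1:
  fixes n m :: real
  assumes "n * m < 4" "n > 0" "m > 0" "n \<in> \<int>" "m \<in> \<int>"
  shows "n = 1 \<or> m = 1"
proof (rule ccontr)
  assume "\<not> ?thesis"
  then have "n \<ge> 2" "m \<ge> 2" using assms(2-5) by (auto elim!: Ints_cases)
  then have "2 * 2 \<le> n * m" by (intro mult_mono) auto
  with assms(1) show False by simp
qed

lemma root_system_diff_mem:
  assumes rs: "root_system \<Phi>" and \<beta>: "\<beta> \<in> \<Phi>" and \<gamma>: "\<gamma> \<in> \<Phi>" and acute: "\<beta> \<bullet> \<gamma> > 0" and "\<beta> \<noteq> \<gamma>"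
  shows "\<beta> - \<gamma> \<in> \<Phi>"
proof -
  define n where "n = 2 * (\<beta> \<bullet> \<gamma>) / (\<gamma> \<bullet> \<gamma>)"
  define m where "m = 2 * (\<gamma> \<bullet> \<beta>) / (\<beta> \<bullet> \<beta>)"
  have sq_pos: "\<gamma> \<bullet> \<gamma> > 0" "\<beta> \<bullet> \<beta> > 0" using rs \<beta> \<gamma> by (auto simp: root_system_def)
  have "\<beta> \<bullet> \<gamma> < norm \<beta> * norm \<gamma>"
    using norm_cauchy_schwarz[of \<beta> \<gamma>] root_system_inner_eq_norm_mult[OF rs \<beta> \<gamma>] \<open>\<beta> \<noteq> \<gamma>\<close> by fastforce
  then have "(\<beta> \<bullet> \<gamma>) * (\<beta> \<bullet> \<gamma>) < (norm \<beta> * norm \<gamma>) * (norm \<beta> * norm \<gamma>)"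
    using acute by (intro mult_strict_mono) auto
  also have "\<dots> = (\<beta> \<bullet> \<beta>) * (\<gamma> \<bullet> \<gamma>)" by (simp add: dot_square_norm power2_eq_square)
  finally have "n * m < 4" using sq_pos by (simp add: n_def m_def inner_commute field_simps)
  moreover have "n > 0" "m > 0" using acute sq_pos by (auto simp: n_def m_def inner_commute)
  moreover have "n \<in> \<int>" "m \<in> \<int>" using rs \<beta> \<gamma> by (auto simp: root_system_def n_def m_def)
  ultimately have "n = 1 \<or> m = 1" by (intro Ints_mult_lt_4_imp_eq_1)
  then show ?thesis
  proof
    assume "n = 1"
    then show ?thesis using rs \<beta> \<gamma> unfolding root_system_def n_def by (metis scaleR_one)
  next
    assume "m = 1"
    then have "\<gamma> - \<beta> \<in> \<Phi>" using rs \<beta> \<gamma> unfolding root_system_def m_def by (metis scaleR_one)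
    from root_system_uminus[OF rs this] show ?thesis by simp
  qed
qed

subsection \<open>Chambers and simple roots\<close>

lemma weyl_chamber_pos_roots_eq:
  assumes "weyl_chamber \<Phi> C"
  obtains v where "\<And>\<alpha>. \<alpha> \<in> \<Phi> \<Longrightarrow> \<alpha> \<bullet> v \<noteq> 0" "pos_roots \<Phi> C = {\<alpha>\<in>\<Phi>. \<alpha> \<bullet> v > 0}"
proof -
  obtain v where v: "v \<in> regular_set \<Phi>" and C: "C = connected_component_set (regular_set \<Phi>) v"
    using assms unfolding weyl_chamber_def by blast
  have "v \<in> C" "connected C" "C \<subseteq> regular_set \<Phi>"
    using v by (simp_all add: C connected_component_subset)
  \<comment> \<open>A root positive at \<open>v\<close> cannot change sign on the connected set \<open>C\<close>, which avoids its hyperplane.\<close>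
  have "\<alpha> \<bullet> x > 0" if "\<alpha> \<in> \<Phi>" "\<alpha> \<bullet> v > 0" "x \<in> C" for \<alpha> x
    using connected_ivt_hyperplane[OF \<open>connected C\<close> \<open>x \<in> C\<close> \<open>v \<in> C\<close>, of \<alpha> 0] that
      \<open>C \<subseteq> regular_set \<Phi>\<close> by (force simp: regular_set_def)
  then have "pos_roots \<Phi> C = {\<alpha>\<in>\<Phi>. \<alpha> \<bullet> v > 0}"
    using \<open>v \<in> C\<close> by (auto simp: pos_roots_def)
  moreover have "\<alpha> \<bullet> v \<noteq> 0" if "\<alpha> \<in> \<Phi>" for \<alpha> using v that by (auto simp: regular_set_def)
  ultimately show ?thesis using that by blast
qed

locale root_system_chamber =
  fixes \<Phi> :: "'a::euclidean_space set" and C :: "'a set"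
  assumes root_system: "root_system \<Phi>" and weyl_chamber: "weyl_chamber \<Phi> C"
begin

abbreviation "P \<equiv> pos_roots \<Phi> C"
abbreviation "B \<equiv> simple_roots \<Phi> C"
abbreviation "coord \<equiv> representation B"

lemma finite_roots: "finite \<Phi>" and span_roots: "span \<Phi> = UNIV"
  using root_system by (auto simp: root_system_def)

lemma pos_roots_subset: "P \<subseteq> \<Phi>" and simple_roots_subset: "B \<subseteq> P"
  by (auto simp: pos_roots_def simple_roots_def)

lemma finite_simple_roots: "finite B"
  using finite_roots pos_roots_subset simple_roots_subset by (blast intro: finite_subset)

lemma pos_roots_or_uminus: "\<alpha> \<in> \<Phi> \<Longrightarrow> \<alpha> \<in> P \<or> - \<alpha> \<in> P"
  using weyl_chamber_pos_roots_eq[OF weyl_chamber] root_system_uminus[OF root_system]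
  by (metis (mono_tags, lifting) inner_minus_left linorder_neqE_linordered_idom mem_Collect_eq neg_0_less_iff_less)

lemma pos_root_nonneg_comb:
  assumes "\<alpha> \<in> P"
  shows "\<exists>c::'a \<Rightarrow> nat. \<alpha> = (\<Sum>\<beta>\<in>B. real (c \<beta>) *\<^sub>R \<beta>)"
proof -
  obtain v where P_eq: "P = {\<alpha>\<in>\<Phi>. \<alpha> \<bullet> v > 0}" using weyl_chamber_pos_roots_eq[OF weyl_chamber] .
  have finite_P: "finite P" using finite_roots pos_roots_subset by (rule finite_subset[rotated])
  \<comment> \<open>Induction on the number of positive roots below \<open>\<alpha>\<close> at \<open>v\<close>; a non-simple \<open>\<alpha>\<close> splits into two such roots.\<close>
  show ?thesis using assms
  proof (induction "card {\<beta>\<in>P. \<beta> \<bullet> v < \<alpha> \<bullet> v}" arbitrary: \<alpha> rule: less_induct)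
    case (less \<alpha>)
    show ?case
    proof (cases "\<alpha> \<in> B")
      case True
      then show ?thesis
        by (intro exI[of _ "\<lambda>\<beta>. if \<beta> = \<alpha> then 1 else 0"])
          (simp add: if_distrib[of real] if_distrib[of "\<lambda>x. x *\<^sub>R _"] finite_simple_roots cong: if_cong)
    next
      case False
      then obtain \<beta> \<gamma> where "\<beta> \<in> P" "\<gamma> \<in> P" and \<alpha>: "\<alpha> = \<beta> + \<gamma>"
        using less.prems by (auto simp: simple_roots_def)
      moreover have "card {\<delta>\<in>P. \<delta> \<bullet> v < \<eta> \<bullet> v} < card {\<delta>\<in>P. \<delta> \<bullet> v < \<alpha> \<bullet> v}"
        if "\<eta> \<in> P" "\<eta> \<bullet> v < \<alpha> \<bullet> v" for \<eta>
        by (rule psubset_card_mono) (use finite_P that in auto)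
      moreover have "\<beta> \<bullet> v < \<alpha> \<bullet> v" "\<gamma> \<bullet> v < \<alpha> \<bullet> v"
        using \<open>\<beta> \<in> P\<close> \<open>\<gamma> \<in> P\<close> by (auto simp: \<alpha> P_eq inner_add_left)
      ultimately obtain c1 c2 :: "'a \<Rightarrow> nat"
        where "\<beta> = (\<Sum>\<delta>\<in>B. real (c1 \<delta>) *\<^sub>R \<delta>)" "\<gamma> = (\<Sum>\<delta>\<in>B. real (c2 \<delta>) *\<^sub>R \<delta>)"
        using less.hyps by meson
      then have "\<alpha> = (\<Sum>\<delta>\<in>B. real (c1 \<delta> + c2 \<delta>) *\<^sub>R \<delta>)"
        by (simp add: \<alpha> sum.distrib scaleR_add_left)
      then show ?thesis by (rule exI[of _ "\<lambda>\<delta>. c1 \<delta> + c2 \<delta>"])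
    qed
  qed
qed

lemma simple_roots_obtuse:
  assumes "\<beta> \<in> B" "\<gamma> \<in> B" "\<beta> \<noteq> \<gamma>"
  shows "\<beta> \<bullet> \<gamma> \<le> 0"
proof (rule ccontr)
  assume "\<not> \<beta> \<bullet> \<gamma> \<le> 0"
  then have "\<beta> - \<gamma> \<in> \<Phi>"
    using assms simple_roots_subset pos_roots_subset by (intro root_system_diff_mem[OF root_system]) auto
  moreover have not_sum: "\<delta> \<noteq> x + y" if "\<delta> \<in> B" "x \<in> P" "y \<in> P" for \<delta> x y
    using that by (auto simp: simple_roots_def)
  ultimately show False
    using pos_roots_or_uminus[of "\<beta> - \<gamma>"] not_sum[OF assms(1), of \<gamma> "\<beta> - \<gamma>"] not_sum[OF assms(2), of \<beta> "- (\<beta> - \<gamma>)"]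
      assms(1,2) simple_roots_subset by auto
qed

lemma independent_simple_roots: "independent B"
proof -
  obtain v where "pos_roots \<Phi> C = {\<alpha>\<in>\<Phi>. \<alpha> \<bullet> v > 0}" using weyl_chamber_pos_roots_eq[OF weyl_chamber] .
  then show ?thesis using finite_simple_roots simple_roots_obtuse simple_roots_subset
    by (intro independent_if_pairwise_obtuse[where w = v]) auto
qed

lemma span_simple_roots: "span B = UNIV"
proof -
  have "P \<subseteq> span B"
  proof
    fix \<alpha> assume "\<alpha> \<in> P"
    then obtain c :: "'a \<Rightarrow> nat" where "\<alpha> = (\<Sum>\<beta>\<in>B. real (c \<beta>) *\<^sub>R \<beta>)" using pos_root_nonneg_comb by blast
    then show "\<alpha> \<in> span B" by (simp add: span_sum span_scale span_base)
  qed
  have "\<Phi> \<subseteq> span B"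
  proof
    fix \<alpha> assume "\<alpha> \<in> \<Phi>"
    then consider "\<alpha> \<in> P" | "- \<alpha> \<in> P" using pos_roots_or_uminus by blast
    then show "\<alpha> \<in> span B" using \<open>P \<subseteq> span B\<close> span_neg[of "- \<alpha>" B] by cases auto
  qed
  then have "span \<Phi> \<subseteq> span B" by (simp add: span_minimal)
  then show ?thesis using span_roots by auto
qed

lemmas coord_linear =
  representation_add[OF independent_simple_roots] representation_diff[OF independent_simple_roots]
  representation_neg[OF independent_simple_roots] representation_scale[OF independent_simple_roots]
  representation_sum[OF independent_simple_roots]

lemma coord_simple_root: "\<gamma> \<in> B \<Longrightarrow> coord \<gamma> \<beta> = (if \<beta> = \<gamma> then 1 else 0)"
  by (simp add: representation_basis independent_simple_roots)

lemma sum_coord_scaleR: "(\<Sum>\<beta>\<in>B. coord y \<beta> *\<^sub>R \<beta>) = y"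
  by (simp add: sum_representation_eq independent_simple_roots span_simple_roots finite_simple_roots)

lemma eq_if_coord_eq: "(\<And>\<beta>. \<beta> \<in> B \<Longrightarrow> coord x \<beta> = coord y \<beta>) \<Longrightarrow> x = y"
  by (metis (no_types, lifting) sum_coord_scaleR sum.cong)

lemma coord_sum_scaleR:
  assumes "T \<subseteq> B"
  shows "coord (\<Sum>\<beta>\<in>T. c \<beta> *\<^sub>R \<beta>) \<gamma> = (if \<gamma> \<in> T then c \<gamma> else 0)"
proof -
  have "finite T" using assms finite_simple_roots by (rule finite_subset)
  have "coord (\<Sum>\<beta>\<in>T. c \<beta> *\<^sub>R \<beta>) \<gamma> = (\<Sum>\<beta>\<in>T. coord (c \<beta> *\<^sub>R \<beta>) \<gamma>)"
    by (simp add: coord_linear span_simple_roots)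
  also have "\<dots> = (\<Sum>\<beta>\<in>T. c \<beta> * (if \<gamma> = \<beta> then 1 else 0))"
    using assms by (intro sum.cong refl) (auto simp: coord_linear span_simple_roots coord_simple_root)
  also have "\<dots> = (if \<gamma> \<in> T then c \<gamma> else 0)"
    using \<open>finite T\<close> by (simp add: if_distrib[of "\<lambda>x. _ * x"] cong: if_cong)
  finally show ?thesis .
qed

lemma coord_int_comb_outside: "S \<subseteq> B \<Longrightarrow> y \<in> int_comb S \<Longrightarrow> \<gamma> \<notin> S \<Longrightarrow> coord y \<gamma> = 0"
  by (auto simp: int_comb_def coord_sum_scaleR dest: subset_trans)

lemma mem_span_if_coord_outside_zero:
  assumes "S \<subseteq> B" "\<And>\<gamma>. \<gamma> \<in> B - S \<Longrightarrow> coord y \<gamma> = 0"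
  shows "y \<in> span S"
proof -
  have "(\<Sum>\<beta>\<in>B. coord y \<beta> *\<^sub>R \<beta>) \<in> span S"
    using assms by (intro span_sum) (metis Diff_iff scale_zero_left span_base span_scale span_zero)
  then show ?thesis by (simp add: sum_coord_scaleR)
qed

lemma nonneg_int_comb_if_coord_nat:
  assumes "S \<subseteq> B" "\<And>\<gamma>. \<gamma> \<in> B \<Longrightarrow> coord y \<gamma> = real (c \<gamma>)" "\<And>\<gamma>. \<gamma> \<in> B - S \<Longrightarrow> c \<gamma> = 0"
  shows "y \<in> nonneg_int_comb S"
proof -
  have "y = (\<Sum>\<beta>\<in>S. real (c \<beta>) *\<^sub>R \<beta>)"
    using assms by (intro eq_if_coord_eq) (auto simp: coord_sum_scaleR)
  moreover have "finite S" using assms(1) finite_simple_roots by (rule finite_subset)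
  ultimately show ?thesis using assms(1) by (auto simp: nonneg_int_comb_def)
qed

lemma pos_root_coord_nat:
  assumes "y \<in> P"
  obtains c :: "'a \<Rightarrow> nat" where "\<And>\<beta>. coord y \<beta> = real (c \<beta>)"
proof -
  obtain c :: "'a \<Rightarrow> nat" where "y = (\<Sum>\<beta>\<in>B. real (c \<beta>) *\<^sub>R \<beta>)" using pos_root_nonneg_comb[OF assms] ..
  then have "coord y \<beta> = real (if \<beta> \<in> B then c \<beta> else 0)" for \<beta> by (simp add: coord_sum_scaleR)
  then show ?thesis by (rule that)
qed

lemma pos_root_coord_nonneg: "y \<in> P \<Longrightarrow> coord y \<beta> \<ge> 0"
  by (metis pos_root_coord_nat of_nat_0_le_iff)

lemma pos_root_if_coord_pos:
  assumes "y \<in> \<Phi>" "coord y \<beta> > 0"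
  shows "y \<in> P"
  using pos_roots_or_uminus[OF assms(1)] pos_root_coord_nonneg[of "- y" \<beta>] assms(2)
  by (auto simp: coord_linear span_simple_roots)

lemma simple_root_eq_if_diff_int_comb:
  assumes "S \<subseteq> B" "\<beta>0 \<in> B - S" "coord x \<beta>0 = 1" "\<alpha>' \<in> B" "x - \<alpha>' \<in> int_comb S"
  shows "\<alpha>' = \<beta>0"
proof -
  have "coord (x - \<alpha>') \<beta>0 = 0" using assms coord_int_comb_outside by blast
  then have "coord \<alpha>' \<beta>0 = 1" using assms(3) by (simp add: coord_linear span_simple_roots)
  then show ?thesis using assms(4) by (simp add: coord_simple_root split: if_splits)
qed

end

subsection \<open>Involutions and S-chambers\<close>

locale S_chamber_involution = root_system_chamber +
  fixes s :: "'a \<Rightarrow> 'a"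
  assumes involution: "s \<in> invols \<Phi>" and S_chamber: "S_chamber \<Phi> s C"
begin

abbreviation "Bb \<equiv> B_bullet \<Phi> s C"

lemma linear_s: "linear s" and s_s: "s (s x) = x" and s_root: "\<alpha> \<in> \<Phi> \<Longrightarrow> s \<alpha> \<in> \<Phi>"
  using involution by (auto simp: invols_def orthogonal_transformation_def)

lemma B_bullet_eq: "Bb = {\<beta>\<in>B. s \<beta> = - \<beta>}"
  using simple_roots_subset pos_roots_subset by (auto simp: B_bullet_def Phi_bullet_def)

lemma B_bullet_subset: "Bb \<subseteq> B"
  by (simp add: B_bullet_def)

lemma s_span_B_bullet: "y \<in> span Bb \<Longrightarrow> s y = - y"
proof (induction rule: span_induct_alt)
  case (step c x y)
  then show ?case using B_bullet_eq linear_s by (simp add: linear_add linear_scale)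
qed (simp add: linear_0[OF linear_s])

lemma s_int_comb_B_bullet: "y \<in> int_comb Bb \<Longrightarrow> s y = - y"
  using int_comb_subset_span s_span_B_bullet by blast

lemma s_simple_root_pos: "\<beta> \<in> B - Bb \<Longrightarrow> s \<beta> \<in> P"
  using S_chamber simple_roots_subset pos_roots_subset B_bullet_eq
  by (cases "s \<beta> = \<beta>") (auto simp: S_chamber_def Phi_star_def Phi_circ_def Phi_bullet_def)

lemma pos_root_coord_off_bullet:
  assumes "y \<in> P" "s y \<noteq> - y"
  obtains \<gamma> where "\<gamma> \<in> B - Bb" "coord y \<gamma> \<ge> 1"
proof -
  obtain c :: "'a \<Rightarrow> nat" where c: "\<And>\<beta>. coord y \<beta> = real (c \<beta>)" using pos_root_coord_nat[OF assms(1)] by blast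
  have "\<exists>\<gamma>\<in>B - Bb. coord y \<gamma> \<noteq> 0"
    using assms(2) B_bullet_subset mem_span_if_coord_outside_zero s_span_B_bullet by blast
  then obtain \<gamma> where "\<gamma> \<in> B - Bb" "c \<gamma> \<noteq> 0" using c by auto
  then show ?thesis using c by (intro that) auto
qed

definition off_bullet_height :: "'a \<Rightarrow> real" where
  "off_bullet_height \<xi> = (\<Sum>\<gamma>\<in>B - Bb. coord \<xi> \<gamma>)"

lemma off_bullet_height_s_simple_root:
  assumes "\<beta> \<in> B - Bb"
  shows "off_bullet_height (s \<beta>) \<ge> 1"
proof -
  have "s \<beta> \<noteq> - \<beta>" using assms B_bullet_eq by auto
  then have "s (s \<beta>) \<noteq> - s \<beta>" by (metis s_s minus_minus)
  then obtain \<gamma> where \<gamma>: "\<gamma> \<in> B - Bb" "coord (s \<beta>) \<gamma> \<ge> 1"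
    using pos_root_coord_off_bullet s_simple_root_pos[OF assms] by blast
  have "coord (s \<beta>) \<gamma> \<le> off_bullet_height (s \<beta>)"
    unfolding off_bullet_height_def using \<gamma>(1) finite_simple_roots
    by (intro member_le_sum pos_root_coord_nonneg s_simple_root_pos[OF assms]) auto
  then show ?thesis using \<gamma>(2) by simp
qed

lemma off_bullet_height_s_bullet:
  assumes "\<beta> \<in> Bb"
  shows "off_bullet_height (s \<beta>) = 0"
proof -
  have "s \<beta> = - \<beta>" "\<beta> \<in> B" using assms B_bullet_eq by auto
  then show ?thesis
    using assms by (auto simp: off_bullet_height_def coord_linear span_simple_roots coord_simple_root intro!: sum.neutral)
qed

lemma off_bullet_height_s:
  "off_bullet_height (s y) = (\<Sum>\<beta>\<in>B - Bb. coord y \<beta> * off_bullet_height (s \<beta>))"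
proof -
  have "s y = s (\<Sum>\<beta>\<in>B. coord y \<beta> *\<^sub>R \<beta>)" by (simp add: sum_coord_scaleR)
  also have "\<dots> = (\<Sum>\<beta>\<in>B. coord y \<beta> *\<^sub>R s \<beta>)" by (simp add: linear_sum[OF linear_s] linear_scale[OF linear_s])
  finally have "off_bullet_height (s y) = (\<Sum>\<beta>\<in>B. coord y \<beta> * off_bullet_height (s \<beta>))"
    by (simp add: off_bullet_height_def coord_linear span_simple_roots sum_distrib_left sum.swap[of _ "B - Bb"])
  also have "\<dots> = (\<Sum>\<beta>\<in>B - Bb. coord y \<beta> * off_bullet_height (s \<beta>))"
    using off_bullet_height_s_bullet finite_simple_roots by (intro sum.mono_neutral_right) auto
  finally show ?thesis .
qed

lemma s_star_simple_root_coord: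
  assumes "\<alpha> \<in> B_star \<Phi> s C"
  obtains \<alpha>' where "\<alpha>' \<in> B - Bb" "coord (s \<alpha>) \<alpha>' = 1" "\<And>\<gamma>. \<gamma> \<in> B - Bb - {\<alpha>'} \<Longrightarrow> coord (s \<alpha>) \<gamma> = 0"
proof -
  define x where "x = s \<alpha>"
  have \<alpha>: "\<alpha> \<in> B - Bb" "s \<alpha> \<noteq> - \<alpha>" "s \<alpha> \<noteq> \<alpha>"
    using assms by (auto simp: B_star_def B_bullet_def Phi_star_def Phi_circ_def Phi_bullet_def)
  have "x \<in> P" using assms S_chamber simple_roots_subset
    by (auto simp: x_def S_chamber_def B_star_def)
  then have nonneg: "coord x \<beta> \<ge> 0" for \<beta> by (rule pos_root_coord_nonneg)
  have "s x \<noteq> - x" using \<alpha>(2) s_s by (metis x_def minus_minus)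
  then obtain \<alpha>' where \<alpha>': "\<alpha>' \<in> B - Bb" "coord x \<alpha>' \<ge> 1"
    using pos_root_coord_off_bullet \<open>x \<in> P\<close> by blast
  have "coord x \<alpha>' + (\<Sum>\<beta>\<in>B - Bb - {\<alpha>'}. coord x \<beta>) = (\<Sum>\<beta>\<in>B - Bb. coord x \<beta>)"
    using \<alpha>'(1) finite_simple_roots by (simp add: sum.remove)
  also have "\<dots> \<le> (\<Sum>\<beta>\<in>B - Bb. coord x \<beta> * off_bullet_height (s \<beta>))"
    using mult_left_mono[OF off_bullet_height_s_simple_root nonneg] by (intro sum_mono) simp
  also have "\<dots> = off_bullet_height (s x)" by (rule off_bullet_height_s[symmetric])
  also have "\<dots> = 1"
    using \<alpha>(1) finite_simple_roots s_s by (simp add: x_def off_bullet_height_def coord_simple_root)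
  finally have "coord x \<alpha>' = 1" "(\<Sum>\<beta>\<in>B - Bb - {\<alpha>'}. coord x \<beta>) = 0"
    using \<alpha>'(2) sum_nonneg[of "B - Bb - {\<alpha>'}" "coord x", OF nonneg] by linarith+
  moreover have "finite (B - Bb - {\<alpha>'})" using finite_simple_roots by simp
  ultimately have "\<forall>\<gamma>\<in>B - Bb - {\<alpha>'}. coord x \<gamma> = 0" using nonneg by (simp add: sum_nonneg_eq_0_iff)
  then show ?thesis using \<open>coord x \<alpha>' = 1\<close> by (intro that[OF \<alpha>'(1)]) (auto simp: x_def)
qed

lemma height_lt_if_add_mem_roots:
  assumes \<alpha>: "\<alpha> \<in> \<Phi>" and \<alpha>': "\<alpha>' \<in> B - Bb" "coord (s \<alpha>) \<alpha>' = 1"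
    and \<gamma>: "\<gamma> \<in> nonneg_int_comb Bb" "\<alpha> + \<gamma> \<in> \<Phi>" "\<gamma> \<noteq> s \<alpha> - \<alpha>'"
  shows "height \<Phi> C \<gamma> < height \<Phi> C (s \<alpha> - \<alpha>')"
proof -
  have "\<gamma> \<in> int_comb Bb" using \<gamma>(1) nonneg_int_comb_subset_int_comb by blast
  then have \<gamma>_\<alpha>': "coord \<gamma> \<alpha>' = 0" and s\<gamma>: "s \<gamma> = - \<gamma>"
    using B_bullet_subset \<alpha>'(1) coord_int_comb_outside s_int_comb_B_bullet by auto
  have "s \<alpha> - \<gamma> \<in> \<Phi>" using s_root[OF \<gamma>(2)] s\<gamma> linear_s by (simp add: linear_add)
  \<comment> \<open>The root \<open>s (\<alpha> + \<gamma>)\<close> has coordinate \<open>1\<close> at \<open>\<alpha>'\<close>, hence is positive.\<close>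
  moreover have "coord (s \<alpha> - \<gamma>) \<alpha>' > 0" using \<alpha>'(2) \<gamma>_\<alpha>' by (simp add: coord_linear span_simple_roots)
  ultimately have "coord (s \<alpha> - \<gamma>) \<beta> \<ge> 0" for \<beta> using pos_root_if_coord_pos pos_root_coord_nonneg by blast
  then have le: "coord \<gamma> \<beta> \<le> coord (s \<alpha> - \<alpha>') \<beta>" if "\<beta> \<in> B" for \<beta>
    using \<alpha>' \<gamma>_\<alpha>' that by (simp add: coord_linear span_simple_roots coord_simple_root)
  moreover have "\<exists>\<beta>\<in>B. coord \<gamma> \<beta> < coord (s \<alpha> - \<alpha>') \<beta>"
  proof (rule ccontr)
    assume "\<not> ?thesis"
    then have "\<gamma> = s \<alpha> - \<alpha>'" by (intro eq_if_coord_eq antisym le) (auto simp: not_less)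
    with \<gamma>(3) show False ..
  qed
  ultimately show ?thesis
    unfolding height_def using finite_simple_roots by (intro sum_strict_mono_ex1) auto
qed

lemma s_star_simple_root_decomp:
  assumes "\<alpha> \<in> B_star \<Phi> s C"
  obtains \<alpha>' where "\<alpha>' \<in> B - Bb" "coord (s \<alpha>) \<alpha>' = 1"
    "s \<alpha> - \<alpha>' \<in> nonneg_int_comb Bb" "\<alpha> + (s \<alpha> - \<alpha>') \<in> \<Phi>"
proof -
  obtain \<alpha>' where \<alpha>': "\<alpha>' \<in> B - Bb" "coord (s \<alpha>) \<alpha>' = 1"
    and off: "\<And>\<gamma>. \<gamma> \<in> B - Bb - {\<alpha>'} \<Longrightarrow> coord (s \<alpha>) \<gamma> = 0"
    using s_star_simple_root_coord[OF assms] by blast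
  have "s \<alpha> \<in> P" using assms S_chamber simple_roots_subset by (auto simp: S_chamber_def B_star_def)
  then obtain c :: "'a \<Rightarrow> nat" where c: "\<And>\<beta>. coord (s \<alpha>) \<beta> = real (c \<beta>)" using pos_root_coord_nat by blast
  have "coord (s \<alpha> - \<alpha>') \<beta> = real (if \<beta> \<in> Bb then c \<beta> else 0)" if "\<beta> \<in> B" for \<beta>
    using that \<alpha>' off c by (auto simp: coord_linear span_simple_roots coord_simple_root)
  then have nonneg: "s \<alpha> - \<alpha>' \<in> nonneg_int_comb Bb"
    by (intro nonneg_int_comb_if_coord_nat[where c = "\<lambda>\<beta>. if \<beta> \<in> Bb then c \<beta> else 0"])
      (use B_bullet_subset in auto)
  then have "s (s \<alpha> - \<alpha>') = - (s \<alpha> - \<alpha>')"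
    using nonneg_int_comb_subset_int_comb s_int_comb_B_bullet by blast
  then have "s (\<alpha> + (s \<alpha> - \<alpha>')) = \<alpha>'" using s_s by (simp add: linear_add[OF linear_s])
  then have "\<alpha> + (s \<alpha> - \<alpha>') = s \<alpha>'" using s_s by metis
  then have "\<alpha> + (s \<alpha> - \<alpha>') \<in> \<Phi>" using \<alpha>'(1) simple_roots_subset pos_roots_subset s_root by auto
  with \<alpha>' nonneg show ?thesis using that by blast
qed

end

theorem proposition1p5:
  fixes \<Phi> :: "'a::euclidean_space set" and s :: "'a \<Rightarrow> 'a" and C :: "'a set" and \<alpha> :: 'a
  assumes "root_system \<Phi>"
    and "s \<in> invols \<Phi>"
    and "weyl_chamber \<Phi> C"
    and "S_chamber \<Phi> s C"
    and "\<alpha> \<in> B_star \<Phi> s C"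
  shows "(\<exists>!\<alpha>'. \<alpha>' \<in> simple_roots \<Phi> C \<and> s \<alpha> - \<alpha>' \<in> int_comb (B_bullet \<Phi> s C)) \<and>
    (\<forall>\<alpha>'. \<alpha>' \<in> simple_roots \<Phi> C \<and> s \<alpha> - \<alpha>' \<in> int_comb (B_bullet \<Phi> s C) \<longrightarrow>
       (let \<alpha>'' = s \<alpha> - \<alpha>' in
          \<alpha>'' \<in> nonneg_int_comb (B_bullet \<Phi> s C) \<and> \<alpha> + \<alpha>'' \<in> \<Phi> \<and>
          (\<forall>\<gamma>\<in>nonneg_int_comb (B_bullet \<Phi> s C). \<alpha> + \<gamma> \<in> \<Phi> \<and> \<gamma> \<noteq> \<alpha>'' \<longrightarrow>
             height \<Phi> C \<gamma> < height \<Phi> C \<alpha>'')))"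
proof -
  interpret S_chamber_involution \<Phi> C s using assms(1-4) by unfold_locales
  obtain \<alpha>' where \<alpha>': "\<alpha>' \<in> B - Bb" "coord (s \<alpha>) \<alpha>' = 1"
    and decomp: "s \<alpha> - \<alpha>' \<in> nonneg_int_comb Bb" "\<alpha> + (s \<alpha> - \<alpha>') \<in> \<Phi>"
    using s_star_simple_root_decomp[OF assms(5)] by blast
  have "\<alpha>1 \<in> B \<and> s \<alpha> - \<alpha>1 \<in> int_comb Bb \<longleftrightarrow> \<alpha>1 = \<alpha>'" for \<alpha>1
    using simple_root_eq_if_diff_int_comb[OF B_bullet_subset \<alpha>'] \<alpha>'(1) decomp(1) nonneg_int_comb_subset_int_comb
    by blast

  moreover have "\<alpha> \<in> \<Phi>" using assms(5) by (auto simp: B_star_def Phi_star_def)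
  ultimately show ?thesis using decomp height_lt_if_add_mem_roots[OF _ \<alpha>'] by (auto simp: Let_def)
qed

end
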